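(* For any integers $Q,k\ge2$ there exists $\epsilon_{Q,k}>0$ such that for every $u\in\mathbb{R}^2$, there are at most four distinct elements $d\in\pm D_{Q!,k}$ for which $|u\cdot d-\frac ab|<\epsilon_{Q,k}$ for some non-zero coprime integers $a,b$ with $2\le b\le Q$. Moreover, the set of all such $d\in\pm D_{Q!,k}$ is centrally symmetric.
   Context: For positive integers $q,k$ with $k\ge2$, let $X_{q,k}=\prod_{j=1}^{k-1}(q^{k+j}+q^{k-j}+1)$ and let $D_{q,k}\subseteq\mathbb{Z}^2$ consist of the points $\frac{X_{q,k}}{q^{k+j}+q^{k-j}+1}\left(q^{k+j}-q^{k-j},\,-q^j-2q^k\right)$ for $j=1,\ldots,k-1$; $\pm D_{q,k}=\{\pm d: d\in D_{q,k}\}$. A set $S$ is centrally symmetric if $S=-S$. $u\cdot d$ is the dot product. *)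

theory Defs
  imports Complex_Main
begin

definition Xqk :: "int \<Rightarrow> nat \<Rightarrow> int" where
  "Xqk q k = (\<Prod>j\<in>{1..k-1}. q^(k+j) + q^(k-j) + 1)"

text \<open>D_{q,k}: the points X/(q^{k+j}+q^{k-j}+1) * (q^{k+j}-q^{k-j}, -q^j-2q^k), j=1..k-1
  (the quotient is an exact integer division since the denominator is a factor of X).\<close>
definition Dqk :: "int \<Rightarrow> nat \<Rightarrow> (int \<times> int) set" where
  "Dqk q k = (\<lambda>j. let c = Xqk q k div (q^(k+j) + q^(k-j) + 1)
                   in (c * (q^(k+j) - q^(k-j)), c * (- (q^j) - 2 * q^k))) ` {1..k-1}"

definition negpt :: "int \<times> int \<Rightarrow> int \<times> int" where
  "negpt d = (- fst d, - snd d)"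

definition pmDqk :: "int \<Rightarrow> nat \<Rightarrow> (int \<times> int) set" where
  "pmDqk q k = Dqk q k \<union> negpt ` Dqk q k"

definition dotp :: "real \<times> real \<Rightarrow> int \<times> int \<Rightarrow> real" where
  "dotp u d = fst u * of_int (fst d) + snd u * of_int (snd d)"

end

(*
  For indices i < j < l the points d_i, d_j, d_l of D_{q,k} satisfy the Cramer relation
  det(d_j,d_l) d_i - det(d_i,d_l) d_j + det(d_i,d_j) d_l = 0.  If u.d_i, u.d_j, u.d_l were all
  within eps of fractions a/b with 2 <= b <= Q, then the integer
  det(d_j,d_l) a_i b_j b_l - det(d_i,d_l) a_j b_i b_l + det(d_i,d_j) a_l b_i b_j
  would have absolute value below b_i b_j b_l / Q^3 <= 1 for eps small, so it would vanish.
  But for q = Q! every denominator b divides q, and det(d_i,d_j) is q^(k+i-j) times a number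
  congruent to -1 mod q.  Dividing by q^(k+i-l) b_i b_l and reducing mod b_j leaves b_j | a_j,
  contradicting coprimality.  Hence at most two indices j have u.d_j or u.(-d_j) near such a
  fraction, which gives at most four points; the symmetry is clear since u.(-d) = -(u.d).
*)
theory Submission
  imports Defs "HOL-Number_Theory.Cong"
begin

definition det2 :: "int \<times> int \<Rightarrow> int \<times> int \<Rightarrow> int" where
  "det2 a b = fst a * snd b - snd a * fst b"

definition Dqk_den :: "int \<Rightarrow> nat \<Rightarrow> nat \<Rightarrow> int" where
  "Dqk_den q k j = q^(k+j) + q^(k-j) + 1"

definition Dqk_mult :: "int \<Rightarrow> nat \<Rightarrow> nat \<Rightarrow> int" where
  "Dqk_mult q k j = Xqk q k div Dqk_den q k j"

definition Dqk_dir :: "int \<Rightarrow> nat \<Rightarrow> nat \<Rightarrow> int \<times> int" where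
  "Dqk_dir q k j = (q^(k+j) - q^(k-j), - (q^j) - 2 * q^k)"

definition Dqk_pt :: "int \<Rightarrow> nat \<Rightarrow> nat \<Rightarrow> int \<times> int" where
  "Dqk_pt q k j = (Dqk_mult q k j * fst (Dqk_dir q k j), Dqk_mult q k j * snd (Dqk_dir q k j))"

lemma Dqk_eq_image: "Dqk q k = Dqk_pt q k ` {1..k-1}"
  unfolding Dqk_def Dqk_pt_def Dqk_mult_def Dqk_dir_def Dqk_den_def by (simp add: Let_def)

lemma det2_scale:
  "det2 (c * fst a, c * snd a) (d * fst b, d * snd b) = c * d * det2 a b"
  unfolding det2_def by (simp add: algebra_simps)

lemma cramer_relation:
  "of_int (det2 b c) * dotp u a - of_int (det2 a c) * dotp u b + of_int (det2 a b) * dotp u c = 0"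
  unfolding det2_def dotp_def by (simp add: algebra_simps)

lemma det2_Dqk_dir:
  assumes "i < j" "j < k"
  shows "\<exists>m. det2 (Dqk_dir q k i) (Dqk_dir q k j) = q^(k+i-j) * (q*m - 1)"
proof -
  obtain s t where j: "j = i + s + 1" and k: "k = i + s + t + 2"
    by (rule that[of "j - i - 1" "k - j - 1"]) (use assms in auto)
  define A where "A = q^i"
  define B where "B = q^s"
  define C where "C = q^t"
  have powers: "q^(k+i) = A^2*B*C*q^2" "q^(k-i) = B*C*q^2" "q^j = A*B*q" "q^k = A*B*C*q^2"
    "q^(k+j) = A^2*B^2*C*q^3" "q^(k-j) = C*q" "q^(k+i-j) = A*C*q"
    unfolding j k A_def B_def C_def by (simp_all add: power_add power2_eq_square power3_eq_cube mult_ac)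
  have "det2 (Dqk_dir q k i) (Dqk_dir q k j) = A*C*q *
      (q * (2*A^2*B^3*C*q^3 - 2*A^2*B^2*C*q^2 + 2*B^2*C*q^2 - 2*B*C*q + B^2*q) - 1)"
    unfolding det2_def Dqk_dir_def fst_conv snd_conv powers A_def[symmetric] by algebra
  then show ?thesis unfolding \<open>q^(k+i-j) = A*C*q\<close> by blast
qed

lemma Dqk_den_cong_1:
  assumes "j < k"
  shows "[Dqk_den q k j = 1] (mod q)"
proof -
  have "q dvd q^(k+j)" "q dvd q^(k-j)"
    using assms by (simp_all add: dvd_power)
  then show ?thesis
    unfolding Dqk_den_def cong_iff_dvd_diff by simp
qed

lemma Dqk_mult_cong_1:
  assumes "q > 0" and j: "j \<in> {1..k-1}"
  shows "[Dqk_mult q k j = 1] (mod q)"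
proof -
  have "Xqk q k = Dqk_den q k j * (\<Prod>y\<in>{1..k-1}-{j}. Dqk_den q k y)"
    unfolding Xqk_def Dqk_den_def using prod.remove[OF _ j] by simp
  moreover have "Dqk_den q k j > 0"
    unfolding Dqk_den_def using \<open>q > 0\<close> by (simp add: add_pos_nonneg)
  ultimately have "Dqk_mult q k j = (\<Prod>y\<in>{1..k-1}-{j}. Dqk_den q k y)"
    unfolding Dqk_mult_def by simp
  also have "[\<dots> = (\<Prod>y\<in>{1..k-1}-{j}. 1)] (mod q)"
    by (rule cong_prod) (auto intro: Dqk_den_cong_1)
  finally show ?thesis by simp
qed

lemma det2_Dqk_pt:
  assumes "q > 0" "1 \<le> i" "i < j" "j < k"
  shows "\<exists>r. det2 (Dqk_pt q k i) (Dqk_pt q k j) = q^(k+i-j) * r \<and> [r = -1] (mod q)"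
proof -
  obtain m where m: "det2 (Dqk_dir q k i) (Dqk_dir q k j) = q^(k+i-j) * (q*m - 1)"
    using det2_Dqk_dir assms by blast
  define r where "r = Dqk_mult q k i * Dqk_mult q k j * (q*m - 1)"
  have "det2 (Dqk_pt q k i) (Dqk_pt q k j) = q^(k+i-j) * r"
    unfolding Dqk_pt_def det2_scale m r_def by (simp only: mult_ac)
  moreover have "[r = 1 * 1 * (0 - 1)] (mod q)"
    unfolding r_def using assms
    by (intro cong_mult cong_diff Dqk_mult_cong_1) (auto simp: cong_0_iff)
  ultimately show ?thesis by auto
qed

lemma weighted_sum_nonzero:
  fixes q A C w ai aj al bi bj bl :: int
  assumes "bi dvd q" "bj dvd q" "bl dvd q" "bi \<noteq> 0" "bl \<noteq> 0"
    and "q dvd A" "q dvd C" "[w = 1] (mod q)"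
    and "coprime aj bj" "\<not> is_unit bj"
  shows "A*ai*bj*bl + w*aj*bi*bl + C*al*bi*bj \<noteq> 0"
proof
  assume zero: "A*ai*bj*bl + w*aj*bi*bl + C*al*bi*bj = 0"
  obtain A' where A': "A = bi * A'" using dvd_trans[OF assms(1,6)] by (rule dvdE)
  obtain C' where C': "C = bl * C'" using dvd_trans[OF assms(3,7)] by (rule dvdE)
  have "bi * bl * (bj * (A'*ai + C'*al) + w*aj) = 0"
    using zero unfolding A' C' by (simp add: algebra_simps)
  then have "bj * (A'*ai + C'*al) + w*aj = 0"
    using assms(4,5) by simp
  then have "w*aj = bj * - (A'*ai + C'*al)"
    by linarith
  then have "bj dvd w*aj" by simp
  moreover have "[w*aj = 1*aj] (mod bj)"
    using cong_dvd_mono_modulus[OF assms(8,2)] by (rule cong_scalar_right)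
  ultimately have "bj dvd aj"
    using cong_dvd_iff by fastforce
  then show False
    using assms(9,10) coprime_common_divisor[of aj bj bj] by simp
qed

lemma Dqk_cramer_sum_nonzero:
  assumes "q > 0" "1 \<le> i" "i < j" "j < l" "l < k"
    and "bi dvd q" "bj dvd q" "bl dvd q" "bi \<noteq> 0" "bl \<noteq> 0"
    and "coprime aj bj" "\<not> is_unit bj"
  shows "det2 (Dqk_pt q k j) (Dqk_pt q k l) * ai*bj*bl - det2 (Dqk_pt q k i) (Dqk_pt q k l) * aj*bi*bl
      + det2 (Dqk_pt q k i) (Dqk_pt q k j) * al*bi*bj \<noteq> 0"
proof -
  obtain rjl where rjl: "det2 (Dqk_pt q k j) (Dqk_pt q k l) = q^(k+j-l) * rjl"
    using det2_Dqk_pt[of q j l k] assms by auto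
  obtain ril where ril: "det2 (Dqk_pt q k i) (Dqk_pt q k l) = q^(k+i-l) * ril" "[ril = -1] (mod q)"
    using det2_Dqk_pt[of q i l k] assms by auto
  obtain rij where rij: "det2 (Dqk_pt q k i) (Dqk_pt q k j) = q^(k+i-j) * rij"
    using det2_Dqk_pt[of q i j k] assms by auto
  define N where "N = q^(k+i-l)"
  have exponents: "k+j-l = (k+i-l) + (j-i)" "k+i-j = (k+i-l) + (l-j)"
    using assms by auto
  have jl: "det2 (Dqk_pt q k j) (Dqk_pt q k l) = N * (q^(j-i) * rjl)"
    and ij: "det2 (Dqk_pt q k i) (Dqk_pt q k j) = N * (q^(l-j) * rij)"
    unfolding rjl rij N_def exponents power_add by (simp_all only: mult.assoc)
  have "q dvd q^(j-i) * rjl" "q dvd q^(l-j) * rij"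
    using assms by (simp_all add: dvd_power)
  moreover have "[- ril = 1] (mod q)"
    using ril(2) by (metis cong_minus_minus_iff minus_minus)
  ultimately have "(q^(j-i) * rjl)*ai*bj*bl + (- ril)*aj*bi*bl + (q^(l-j) * rij)*al*bi*bj \<noteq> 0"
    using assms by (intro weighted_sum_nonzero) auto
  moreover have "N \<noteq> 0"
    unfolding N_def using assms(1) by simp
  moreover have "det2 (Dqk_pt q k j) (Dqk_pt q k l) * ai*bj*bl - det2 (Dqk_pt q k i) (Dqk_pt q k l) * aj*bi*bl
      + det2 (Dqk_pt q k i) (Dqk_pt q k j) * al*bi*bj
      = N * ((q^(j-i) * rjl)*ai*bj*bl + (- ril)*aj*bi*bl + (q^(l-j) * rij)*al*bi*bj)"
    unfolding jl ij ril(1) N_def[symmetric] by (simp add: algebra_simps)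
  ultimately show ?thesis by simp
qed

lemma integer_relation_of_approximations:
  fixes ci cj cl ai aj al bi bj bl :: int and xi xj xl \<epsilon> M Q :: real
  assumes rel: "ci*xi + cj*xj + cl*xl = 0"
    and approx: "\<bar>xi - ai/bi\<bar> < \<epsilon>" "\<bar>xj - aj/bj\<bar> < \<epsilon>" "\<bar>xl - al/bl\<bar> < \<epsilon>"
    and denoms: "0 < bi" "bi \<le> Q" "0 < bj" "bj \<le> Q" "0 < bl" "bl \<le> Q"
    and coeffs: "\<bar>ci\<bar> \<le> M" "\<bar>cj\<bar> \<le> M" "\<bar>cl\<bar> \<le> M"
    and small: "3*M*\<epsilon> < 1/Q^3"
  shows "ci*ai*bj*bl + cj*aj*bi*bl + cl*al*bi*bj = 0"
proof -
  define Z :: real where "Z = of_int (ci*ai*bj*bl + cj*aj*bi*bl + cl*al*bi*bj)"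
  define B :: real where "B = of_int (bi*bj*bl)"
  have term_bound: "\<bar>of_int c * y\<bar> \<le> M*\<epsilon>" if "of_int \<bar>c\<bar> \<le> M" "\<bar>y\<bar> < \<epsilon>" for c :: int and y :: real
    unfolding abs_mult using that by (intro mult_mono) auto
  have B_pos: "0 < B"
    unfolding B_def using denoms by simp
  have "Z / B = ci*(ai/bi) + cj*(aj/bj) + cl*(al/bl)"
    unfolding Z_def B_def using denoms by (simp add: field_simps)
  also have "\<dots> = - (ci*(xi - ai/bi) + cj*(xj - aj/bj) + cl*(xl - al/bl))"
    using rel by (simp add: algebra_simps)
  finally have "\<bar>Z\<bar> / B \<le> 3*M*\<epsilon>"
    using term_bound[OF coeffs(1) approx(1)] term_bound[OF coeffs(2) approx(2)]
      term_bound[OF coeffs(3) approx(3)] B_pos by (simp add: abs_divide)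
  also have "\<dots> < 1 / Q^3"
    by (fact small)
  also have "\<dots> \<le> 1 / B"
  proof -
    have "B \<le> Q*Q*Q"
      unfolding B_def using denoms by (simp add: mult_mono)
    then show ?thesis
      using B_pos by (intro divide_left_mono) (auto simp: power3_eq_cube)
  qed
  finally have "\<bar>Z\<bar> < 1"
    using B_pos by (simp add: divide_less_cancel)
  then show ?thesis
    unfolding Z_def by linarith
qed

definition near_fraction :: "nat \<Rightarrow> real \<Rightarrow> real \<Rightarrow> bool" where
  "near_fraction Q \<epsilon> x \<longleftrightarrow> (\<exists>a b :: int. a \<noteq> 0 \<and> b \<noteq> 0 \<and> coprime a b \<and>
     2 \<le> b \<and> b \<le> int Q \<and> \<bar>x - of_int a / of_int b\<bar> < \<epsilon>)"

lemma near_fraction_uminus [simp]: "near_fraction Q \<epsilon> (- x) \<longleftrightarrow> near_fraction Q \<epsilon> x"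
proof -
  have "near_fraction Q \<epsilon> (- y)" if near: "near_fraction Q \<epsilon> y" for y
  proof -
    obtain a b :: int where "a \<noteq> 0" "b \<noteq> 0" "coprime a b" "2 \<le> b" "b \<le> int Q" "\<bar>y - a/b\<bar> < \<epsilon>"
      using near unfolding near_fraction_def by blast
    moreover have "- y - of_int (- a)/b = - (y - a/b)"
      by simp
    ultimately show ?thesis
      unfolding near_fraction_def by (intro exI[of _ "- a"] exI[of _ b]) simp
  qed
  from this[of x] this[of "- x"] show ?thesis by auto
qed

lemma dotp_negpt [simp]: "dotp u (negpt d) = - dotp u d"
  unfolding dotp_def negpt_def by simp

lemma Dqk_no_three_near_fractions:
  assumes "q > 0" and dvd_q: "\<And>b. 2 \<le> b \<Longrightarrow> b \<le> int Q \<Longrightarrow> b dvd q"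
    and det_bound: "\<And>x y. x \<in> {1..k-1} \<Longrightarrow> y \<in> {1..k-1} \<Longrightarrow>
      \<bar>real_of_int (det2 (Dqk_pt q k x) (Dqk_pt q k y))\<bar> \<le> M"
    and small: "3*M*\<epsilon> < 1/(real Q)^3"
    and "1 \<le> i" "i < j" "j < l" "l < k"
  shows "\<not> (near_fraction Q \<epsilon> (dotp u (Dqk_pt q k i)) \<and> near_fraction Q \<epsilon> (dotp u (Dqk_pt q k j))
      \<and> near_fraction Q \<epsilon> (dotp u (Dqk_pt q k l)))"
proof
  assume "near_fraction Q \<epsilon> (dotp u (Dqk_pt q k i)) \<and> near_fraction Q \<epsilon> (dotp u (Dqk_pt q k j))
      \<and> near_fraction Q \<epsilon> (dotp u (Dqk_pt q k l))"
  then obtain ai bi aj bj al bl :: int where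
    i: "2 \<le> bi" "bi \<le> int Q" "\<bar>dotp u (Dqk_pt q k i) - ai/bi\<bar> < \<epsilon>" and
    j: "coprime aj bj" "2 \<le> bj" "bj \<le> int Q" "\<bar>dotp u (Dqk_pt q k j) - aj/bj\<bar> < \<epsilon>" and
    l: "2 \<le> bl" "bl \<le> int Q" "\<bar>dotp u (Dqk_pt q k l) - al/bl\<bar> < \<epsilon>"
    unfolding near_fraction_def by blast
  let ?cij = "det2 (Dqk_pt q k i) (Dqk_pt q k j)"
  let ?cil = "det2 (Dqk_pt q k i) (Dqk_pt q k l)"
  let ?cjl = "det2 (Dqk_pt q k j) (Dqk_pt q k l)"
  have "?cjl*ai*bj*bl + (- ?cil)*aj*bi*bl + ?cij*al*bi*bj = 0"
  proof (rule integer_relation_of_approximations[OF _ i(3) j(4) l(3)])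
    show "real_of_int ?cjl * dotp u (Dqk_pt q k i) + real_of_int (- ?cil) * dotp u (Dqk_pt q k j)
        + real_of_int ?cij * dotp u (Dqk_pt q k l) = 0"
      using cramer_relation[of "Dqk_pt q k j" "Dqk_pt q k l" u "Dqk_pt q k i"] by simp
    show "of_int \<bar>?cjl\<bar> \<le> M" "of_int \<bar>- ?cil\<bar> \<le> M" "of_int \<bar>?cij\<bar> \<le> M"
      using det_bound assms by auto
  qed (use i j l small in auto)
  moreover have "?cjl*ai*bj*bl - ?cil*aj*bi*bl + ?cij*al*bi*bj \<noteq> 0"
    using i j l assms by (intro Dqk_cramer_sum_nonzero) auto
  ultimately show False by simp
qed

lemma int_dvd_fact:
  fixes b :: int
  assumes "1 \<le> b" "b \<le> int n"
  shows "b dvd int (fact n)"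
proof -
  have "nat b dvd fact n"
    using assms by (intro dvd_fact) auto
  then have "int (nat b) dvd int (fact n)"
    by (simp only: int_dvd_int_iff)
  then show ?thesis
    using assms by simp
qed

lemma card_le_2_if_no_increasing_triple:
  fixes J :: "'a::linorder set"
  assumes "\<And>i j l. i \<in> J \<Longrightarrow> j \<in> J \<Longrightarrow> l \<in> J \<Longrightarrow> i < j \<Longrightarrow> j < l \<Longrightarrow> False"
  shows "card J \<le> 2"
proof (rule ccontr)
  assume "\<not> card J \<le> 2"
  then obtain T where "T \<subseteq> J" "card T = 3"
    by (metis not_less_eq_eq numeral_2_eq_2 numeral_3_eq_3 obtain_subset_with_card_n)
  then obtain x y z where "x \<in> J" "y \<in> J" "z \<in> J" "x \<noteq> y" "y \<noteq> z" "x \<noteq> z"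
    by (auto simp: card_3_iff)
  then show False
    using assms by (metis neq_iff)
qed

lemma card_pmDqk_filter_le:
  "card {d \<in> pmDqk q k. P d} \<le> 2 * card {j \<in> {1..k-1}. P (Dqk_pt q k j) \<or> P (negpt (Dqk_pt q k j))}"
  (is "_ \<le> 2 * card ?J")
proof -
  have "{d \<in> pmDqk q k. P d} \<subseteq> Dqk_pt q k ` ?J \<union> (negpt \<circ> Dqk_pt q k) ` ?J"
    unfolding pmDqk_def Dqk_eq_image by auto
  then have "card {d \<in> pmDqk q k. P d} \<le> card (Dqk_pt q k ` ?J \<union> (negpt \<circ> Dqk_pt q k) ` ?J)"
    by (intro card_mono) auto
  also have "\<dots> \<le> card (Dqk_pt q k ` ?J) + card ((negpt \<circ> Dqk_pt q k) ` ?J)"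
    by (rule card_Un_le)
  also have "\<dots> \<le> 2 * card ?J"
    using card_image_le[of ?J "Dqk_pt q k"] card_image_le[of ?J "negpt \<circ> Dqk_pt q k"] by simp
  finally show ?thesis .
qed

lemma negpt_image_pmDqk_filter:
  assumes "\<And>d. P (negpt d) \<longleftrightarrow> P d"
  shows "negpt ` {d \<in> pmDqk q k. P d} = {d \<in> pmDqk q k. P d}"
proof -
  have involution: "negpt (negpt d) = d" for d
    unfolding negpt_def by simp
  have closed: "negpt d \<in> pmDqk q k" if "d \<in> pmDqk q k" for d
    using that unfolding pmDqk_def by (auto simp: involution)
  have maps_to: "negpt d \<in> {d \<in> pmDqk q k. P d}" if "d \<in> {d \<in> pmDqk q k. P d}" for d
    using that assms closed by simp
  show ?thesis
  proof (intro equalityI image_subsetI subsetI)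
    fix d
    assume "d \<in> {d \<in> pmDqk q k. P d}"
    then have "negpt d \<in> {d \<in> pmDqk q k. P d}"
      by (rule maps_to)
    then show "d \<in> negpt ` {d \<in> pmDqk q k. P d}"
      by (rule image_eqI[rotated]) (simp add: involution)
  qed (fact maps_to)
qed

lemma card_Dqk_near_fraction_le_2:
  assumes "Q > 0" "q > 0" and dvd_q: "\<And>b. 2 \<le> b \<Longrightarrow> b \<le> int Q \<Longrightarrow> b dvd q"
  obtains \<epsilon> :: real where "\<epsilon> > 0"
    "\<And>u. card {j \<in> {1..k-1}. near_fraction Q \<epsilon> (dotp u (Dqk_pt q k j))} \<le> 2"
proof -
  define det_abs :: "nat \<times> nat \<Rightarrow> real"
    where "det_abs p = \<bar>of_int (det2 (Dqk_pt q k (fst p)) (Dqk_pt q k (snd p)))\<bar>" for p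
  define M where "M = sum det_abs ({1..k-1} \<times> {1..k-1})"
  have det_bound: "\<bar>real_of_int (det2 (Dqk_pt q k x) (Dqk_pt q k y))\<bar> \<le> M"
    if "x \<in> {1..k-1}" "y \<in> {1..k-1}" for x y
    using member_le_sum[where f = det_abs and i = "(x, y)" and A = "{1..k-1} \<times> {1..k-1}"] that
    unfolding M_def det_abs_def by auto
  have "M \<ge> 0"
    unfolding M_def det_abs_def by (simp add: sum_nonneg)
  define \<epsilon> where "\<epsilon> = 1 / ((real Q)^3 * (3*M + 1))"
  have "(real Q)^3 > 0" "3*M + 1 > 0"
    using assms(1) \<open>M \<ge> 0\<close> by simp_all
  then have "\<epsilon> > 0" and "(3*M + 1) * \<epsilon> = 1 / (real Q)^3"
    unfolding \<epsilon>_def by simp_all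
  then have small: "3*M*\<epsilon> < 1 / (real Q)^3"
    by (simp add: distrib_right)
  show thesis
  proof (rule that[OF \<open>\<epsilon> > 0\<close>], rule card_le_2_if_no_increasing_triple)
    fix u i j l
    assume "i \<in> {j \<in> {1..k-1}. near_fraction Q \<epsilon> (dotp u (Dqk_pt q k j))}"
      "j \<in> {j \<in> {1..k-1}. near_fraction Q \<epsilon> (dotp u (Dqk_pt q k j))}"
      "l \<in> {j \<in> {1..k-1}. near_fraction Q \<epsilon> (dotp u (Dqk_pt q k j))}"
      "i < j" "j < l"
    moreover from this have "1 \<le> i" "l < k"
      by auto
    ultimately show False
      using Dqk_no_three_near_fractions[OF \<open>q > 0\<close> dvd_q det_bound small, of i j l u] by simp
  qed
qed

theorem lemma6:
  fixes Q k :: nat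
  assumes "Q \<ge> 2" and "k \<ge> 2"
  shows "\<exists>\<epsilon>::real. \<epsilon> > 0 \<and> (\<forall>u :: real \<times> real.
     (let S = {d \<in> pmDqk (int (fact Q)) k. \<exists>a b :: int. a \<noteq> 0 \<and> b \<noteq> 0 \<and> coprime a b \<and>
                  2 \<le> b \<and> b \<le> int Q \<and> \<bar>dotp u d - of_int a / of_int b\<bar> < \<epsilon>}
      in card S \<le> 4 \<and> negpt ` S = S))"
proof -
  obtain \<epsilon> where "\<epsilon> > 0" and few:
    "\<And>u. card {j \<in> {1..k-1}. near_fraction Q \<epsilon> (dotp u (Dqk_pt (int (fact Q)) k j))} \<le> 2"
    by (rule card_Dqk_near_fraction_le_2[of Q "int (fact Q)" k]) (use assms(1) int_dvd_fact in auto)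
  show ?thesis
  proof (intro exI[of _ \<epsilon>] conjI allI)
    fix u :: "real \<times> real"
    let ?S = "{d \<in> pmDqk (int (fact Q)) k. near_fraction Q \<epsilon> (dotp u d)}"
    have "card ?S \<le> 4"
      using card_pmDqk_filter_le[of "int (fact Q)" k "\<lambda>d. near_fraction Q \<epsilon> (dotp u d)"] few[of u]
      by simp
    moreover have "negpt ` ?S = ?S"
      by (rule negpt_image_pmDqk_filter) simp
    ultimately show "let S = {d \<in> pmDqk (int (fact Q)) k. \<exists>a b :: int. a \<noteq> 0 \<and> b \<noteq> 0 \<and> coprime a b \<and>
                  2 \<le> b \<and> b \<le> int Q \<and> \<bar>dotp u d - of_int a / of_int b\<bar> < \<epsilon>}
      in card S \<le> 4 \<and> negpt ` S = S"
      unfolding Let_def near_fraction_def[symmetric] by simp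
  qed (fact \<open>\<epsilon> > 0\<close>)
qed

end
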